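(* Let $P\subset\mathbb R^2$ be an $\mathbb R$-$\Delta_2$-free polygon with rational diameter $l=1+2a>1$ (i.e. $a>0$), and suppose the segment $\mathrm{conv}((-a,0),(1+a,0))$ is contained in $P$. Then for every $b\in\mathbb Z$ the interior of $P$ is disjoint from the segments $\mathrm{conv}((b-a,1),(b+a,1))$ and $\mathrm{conv}((b-a,-1),(b+a,-1))$. In particular, if $a\ge\frac12$, then $P\subset\{(x,y): -1\le y\le 1\}$ and $\mathrm{width}(P)\le 2$.
   Context: A polygon is a two-dimensional convex polytope in $\mathbb R^2$. $\Delta_2=\mathrm{conv}(\mathbf 0,e_1,e_2)$. An $\mathbb R$-unimodular transformation is $T(x)=Mx+b$ with $M\in\mathrm{GL}_2(\mathbb Z)$, $b\in\mathbb R^2$; an $\mathbb R$-unimodular copy of $X$ is $T(X)$. A convex set is $\mathbb R$-$\Delta_2$-free if its relative interior contains no $\mathbb R$-unimodular copy of $\Delta_2$. The rational diameter of a convex body $K$ is $\max\{l\ge0: T(\mathrm{conv}(\mathbf 0,le_1))\subset K$ for some $\mathbb R$-unimodular $T\}$. Lattice width: $\mathrm{width}(K)=\inf_{u\in(\mathbb Z^2)^*\setminus\{0\}}\sup_{x,y\in K}|u(x)-u(y)|$. *)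

theory Defs
  imports "HOL-Analysis.Analysis"
begin

definition polygon :: "(real \<times> real) set \<Rightarrow> bool" where
  "polygon P \<longleftrightarrow> polytope P \<and> aff_dim P = 2"

definition R_unimodular :: "(real \<times> real \<Rightarrow> real \<times> real) \<Rightarrow> bool" where
  "R_unimodular T \<longleftrightarrow>
     (\<exists>m11 m12 m21 m22 :: int. \<exists>b1 b2 :: real.
        \<bar>m11 * m22 - m12 * m21\<bar> = 1 \<and>
        T = (\<lambda>(x, y). (of_int m11 * x + of_int m12 * y + b1,
                       of_int m21 * x + of_int m22 * y + b2)))"

definition Delta2 :: "(real \<times> real) set" where
  "Delta2 = convex hull {(0, 0), (1, 0), (0, 1)}"

definition R_Delta2_free :: "(real \<times> real) set \<Rightarrow> bool" where
  "R_Delta2_free K \<longleftrightarrow> \<not> (\<exists>T. R_unimodular T \<and> T ` Delta2 \<subseteq> rel_interior K)"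

definition rational_diameter :: "(real \<times> real) set \<Rightarrow> real" where
  "rational_diameter K =
     (GREATEST l. l \<ge> 0 \<and> (\<exists>T. R_unimodular T \<and> T ` closed_segment (0, 0) (l, 0) \<subseteq> K))"

definition lattice_width :: "(real \<times> real) set \<Rightarrow> real" where
  "lattice_width K =
     (INF u \<in> {u :: int \<times> int. u \<noteq> (0, 0)}.
        SUP xy \<in> K \<times> K. \<bar>of_int (fst u) * (fst (fst xy) - fst (snd xy))
                          + of_int (snd u) * (snd (fst xy) - snd (snd xy))\<bar>)"

end

theory Submission
  imports Defs
begin

text \<open>
  If an interior point \<open>(c, \<plusminus>1)\<close> lies within \<open>a\<close> of an integer \<open>b\<close>, then the triangle with
  apex \<open>(c, \<plusminus>1)\<close> over a unit subsegment of the base \<open>[-a, 1 + a] \<times> {0}\<close> is an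
  \<open>\<real>\<close>-unimodular copy of \<open>\<Delta>\<^sub>2\<close> (matrix \<open>[[1, b], [0, \<plusminus>1]]\<close>) lying in \<open>P\<close>. Shrinking the
  base towards the apex pushes it into the interior; the slack \<open>a > 0\<close> in the base and a
  small ball around the apex absorb the resulting displacement, so the copy fits into the
  interior, contradicting \<open>\<real>\<close>-\<open>\<Delta>\<^sub>2\<close>-freeness. For \<open>a \<ge> 1/2\<close> every real is within \<open>a\<close> of an
  integer, so the interior avoids the lines \<open>y = \<plusminus>1\<close> entirely; being convex and meeting
  \<open>y = 0\<close>, it lies between them.
\<close>

lemma closed_segment_horizontal:
  fixes u v y :: real
  shows "closed_segment (u, y) (v, y) = (\<lambda>t. (t, y)) ` closed_segment u v"
proof -
  have "(1 - s) *\<^sub>R (u, y) + s *\<^sub>R (v, y) = ((1 - s) * u + s * v, y)" for s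
    by (simp add: algebra_simps)
  then show ?thesis
    unfolding closed_segment_def by auto
qed

lemma R_unimodular_shear:
  fixes b m :: int and x y :: real
  assumes "\<bar>m\<bar> = 1"
  shows "R_unimodular (\<lambda>(u, w). (u + of_int b * w + x, of_int m * w + y))"
  unfolding R_unimodular_def using assms
  by (intro exI[of _ 1] exI[of _ b] exI[of _ 0] exI[of _ m] exI[of _ x] exI[of _ y]) auto

lemma R_unimodular_triangle:
  fixes S :: "(real \<times> real) set" and b m :: int and x y :: real
  assumes "convex S" "\<bar>m\<bar> = 1"
    and "(x, y) \<in> S" "(x + 1, y) \<in> S" "(x + of_int b, y + of_int m) \<in> S"
  shows "\<exists>T. R_unimodular T \<and> T ` Delta2 \<subseteq> S"
proof (intro exI conjI)
  define T where "T = (\<lambda>(u, w). (u + of_int b * w + x, of_int m * w + (y::real)))"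
  show "R_unimodular T"
    unfolding T_def using assms(2) by (rule R_unimodular_shear)
  have "T ` Delta2 \<subseteq> convex hull {(x, y), (x + 1, y), (x + of_int b, y + of_int m)}"
  proof
    fix z assume "z \<in> T ` Delta2"
    then obtain u v w :: real where uvw: "0 \<le> u" "0 \<le> v" "0 \<le> w" "u + v + w = 1"
      and z: "z = T (v, w)"
      unfolding Delta2_def convex_hull_3 by auto
    have "z = u *\<^sub>R (x, y) + v *\<^sub>R (x + 1, y) + w *\<^sub>R (x + of_int b, y + of_int m)"
    proof -
      have u: "u = 1 - v - w" using uvw(4) by simp
      show ?thesis unfolding z T_def u by (simp add: algebra_simps)
    qed
    then show "z \<in> convex hull {(x, y), (x + 1, y), (x + of_int b, y + of_int m)}"
      unfolding convex_hull_3 using uvw by blast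
  qed
  also have "\<dots> \<subseteq> S"
    using assms by (intro hull_minimal) auto
  finally show "T ` Delta2 \<subseteq> S" .
qed

lemma unit_base_placement:
  fixes a c \<eta> :: real and b :: int
  assumes "\<bar>c - of_int b\<bar> \<le> a" "0 < \<eta>" "\<eta> \<le> 1/2" "\<eta> \<le> a"
  shows "\<exists>\<alpha>. - a \<le> \<alpha> \<and> \<alpha> + 1 / (1 - \<eta>) \<le> 1 + a \<and>
             \<bar>(1 - \<eta>) * \<alpha> + \<eta> * c + of_int b - c\<bar> \<le> (1 + \<bar>of_int b\<bar>) * \<eta>"
proof -
  define \<sigma> where "\<sigma> = \<eta> / (1 - \<eta>)"
  have \<sigma>: "1 / (1 - \<eta>) = 1 + \<sigma>" "(1 - \<eta>) * \<sigma> = \<eta>" "0 \<le> \<sigma>" "\<sigma> \<le> 2 * \<eta>"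
    using assms(2,3) by (auto simp: \<sigma>_def field_simps)
  \<comment> \<open>For \<open>\<alpha> = t\<close> the left-hand side of the last conclusion vanishes; \<open>\<alpha>\<close> is \<open>t\<close> clamped to the
      admissible range, which moves it by at most \<open>(1 + \<bar>b\<bar>) \<sigma>\<close>.\<close>
  define t where "t = c - of_int b / (1 - \<eta>)"
  have t: "t = c - of_int b - \<sigma> * of_int b"
    using assms(3) by (simp add: t_def \<sigma>_def field_simps)
  define \<alpha> where "\<alpha> = max (- a) (min t (a - \<sigma>))"
  have "\<bar>\<sigma> * of_int b\<bar> \<le> \<sigma> * \<bar>of_int b\<bar>" "0 \<le> \<sigma> * \<bar>of_int b\<bar>"
    using \<sigma>(3) by (simp_all add: abs_mult)
  then have \<alpha>: "- a \<le> \<alpha>" "\<alpha> + (1 + \<sigma>) \<le> 1 + a" "\<bar>\<alpha> - t\<bar> \<le> (1 + \<bar>of_int b\<bar>) * \<sigma>"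
    using \<sigma>(3,4) assms(1,4) by (auto simp: \<alpha>_def t abs_le_iff algebra_simps min_def max_def)
  have "(1 - \<eta>) * \<alpha> + \<eta> * c + of_int b - c = (1 - \<eta>) * (\<alpha> - t)"
    using assms(3) by (simp add: t_def field_simps)
  also have "\<bar>\<dots>\<bar> \<le> (1 - \<eta>) * ((1 + \<bar>of_int b\<bar>) * \<sigma>)"
    using \<alpha>(3) assms(3) by (simp add: abs_mult mult_left_mono)
  also have "\<dots> = (1 + \<bar>of_int b\<bar>) * \<eta>"
    by (metis \<sigma>(2) mult.left_commute)
  finally show ?thesis
    using \<alpha>(1,2) \<sigma>(1) by auto
qed

lemma convex_shrink_Pair_interior:
  fixes K :: "(real \<times> real) set"
  assumes "convex K" "(c, d) \<in> interior K" "(p, q) \<in> closure K" "0 < \<eta>" "\<eta> \<le> 1"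
  shows "((1 - \<eta>) * p + \<eta> * c, (1 - \<eta>) * q + \<eta> * d) \<in> interior K"
proof -
  have "(p, q) - \<eta> *\<^sub>R ((p, q) - (c, d)) \<in> interior K"
    using mem_interior_closure_convex_shrink[OF assms] .
  then show ?thesis
    by (simp add: algebra_simps)
qed

lemma R_unimodular_triangle_near_apex:
  fixes K :: "(real \<times> real) set" and a c \<eta> :: real and b e :: int
  assumes "convex K"
    and base: "closed_segment (- a, 0) (1 + a, 0) \<subseteq> closure K"
    and apex: "cball (c, of_int e) ((2 + \<bar>of_int b\<bar>) * \<eta>) \<subseteq> interior K"
    and "\<bar>e\<bar> = 1" "\<bar>c - of_int b\<bar> \<le> a" "0 < \<eta>" "\<eta> \<le> 1/2" "\<eta> \<le> a"
  shows "\<exists>T. R_unimodular T \<and> T ` Delta2 \<subseteq> interior K"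
proof -
  obtain \<alpha> where \<alpha>: "- a \<le> \<alpha>" "\<alpha> + 1 / (1 - \<eta>) \<le> 1 + a"
    and close: "\<bar>(1 - \<eta>) * \<alpha> + \<eta> * c + of_int b - c\<bar> \<le> (1 + \<bar>of_int b\<bar>) * \<eta>"
    using unit_base_placement[of c b a \<eta>] assms(5-8) by blast
  have "(c, of_int e) \<in> interior K"
    using apex \<open>0 < \<eta>\<close> by (simp add: subset_iff add_pos_nonneg)
  have shrink: "((1 - \<eta>) * p + \<eta> * c, \<eta> * of_int e) \<in> interior K"
    if "- a \<le> p" "p \<le> 1 + a" for p
  proof -
    have "(p, 0) \<in> closure K"
      using base that by (auto simp: closed_segment_horizontal closed_segment_eq_real_ivl)
    from convex_shrink_Pair_interior[OF \<open>convex K\<close> \<open>(c, of_int e) \<in> interior K\<close> this \<open>0 < \<eta>\<close>]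
    show ?thesis
      using \<open>\<eta> \<le> 1/2\<close> by simp
  qed
  define x where "x = (1 - \<eta>) * \<alpha> + \<eta> * c"
  define y where "y = \<eta> * of_int e"
  have "0 < 1 / (1 - \<eta>)"
    using \<open>\<eta> \<le> 1/2\<close> by simp
  then have ends: "- a \<le> \<alpha>" "\<alpha> \<le> 1 + a" "- a \<le> \<alpha> + 1 / (1 - \<eta>)" "\<alpha> + 1 / (1 - \<eta>) \<le> 1 + a"
    using \<alpha> by linarith+
  have left: "(x, y) \<in> interior K"
    using shrink[OF ends(1,2)] by (simp add: x_def y_def)
  have right: "(x + 1, y) \<in> interior K"
  proof -
    have "(1 - \<eta>) * (\<alpha> + 1 / (1 - \<eta>)) + \<eta> * c = x + 1"
      using \<open>\<eta> \<le> 1/2\<close> by (simp add: x_def field_simps)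
    then show ?thesis
      using shrink[OF ends(3,4)] by (simp add: y_def)
  qed
  have top: "(x + of_int b, y + of_int e) \<in> interior K"
  proof -
    have "\<bar>y\<bar> = \<eta>"
      using \<open>0 < \<eta>\<close> \<open>\<bar>e\<bar> = 1\<close> by (simp add: y_def abs_mult)
    have "dist (x + of_int b, y + of_int e) (c, of_int e) = norm (x + of_int b - c, y)"
      by (simp add: dist_norm)
    also have "\<dots> \<le> \<bar>x + of_int b - c\<bar> + \<bar>y\<bar>"
      using norm_Pair_le[of "x + of_int b - c" y] by simp
    also have "\<dots> \<le> (2 + \<bar>of_int b\<bar>) * \<eta>"
      using close \<open>\<bar>y\<bar> = \<eta>\<close> by (simp add: x_def algebra_simps)
    finally show ?thesis
      using apex by (auto simp: dist_commute)
  qed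
  show ?thesis
    using R_unimodular_triangle[OF convex_interior[OF \<open>convex K\<close>] \<open>\<bar>e\<bar> = 1\<close> left right top] .
qed

lemma R_unimodular_triangle_in_interior:
  fixes K :: "(real \<times> real) set" and a c :: real and b e :: int
  assumes "convex K" and "a > 0"
    and "closed_segment (- a, 0) (1 + a, 0) \<subseteq> closure K"
    and "(c, of_int e) \<in> interior K" and "\<bar>e\<bar> = 1" and "\<bar>c - of_int b\<bar> \<le> a"
  shows "\<exists>T. R_unimodular T \<and> T ` Delta2 \<subseteq> interior K"
proof -
  obtain \<delta> where "\<delta> > 0" and ball: "cball (c, of_int e) \<delta> \<subseteq> interior K"
    using assms(4) open_contains_cball open_interior by blast
  define \<eta> where "\<eta> = min (1/2) (min a (\<delta> / (2 + \<bar>of_int b\<bar>)))"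
  have "0 < \<eta>" "\<eta> \<le> a"
    using \<open>a > 0\<close> \<open>\<delta> > 0\<close> by (simp_all add: \<eta>_def)
  have "\<eta> \<le> 1/2"
    unfolding \<eta>_def by (rule min.cobounded1)
  have "\<eta> \<le> \<delta> / (2 + \<bar>of_int b\<bar>)"
    by (simp add: \<eta>_def)
  then have "(2 + \<bar>of_int b\<bar>) * \<eta> \<le> \<delta>"
    by (simp add: le_divide_eq add_pos_nonneg mult.commute)
  then have "cball (c, of_int e) ((2 + \<bar>of_int b\<bar>) * \<eta>) \<subseteq> interior K"
    using subset_cball ball by blast
  then show ?thesis
    using R_unimodular_triangle_near_apex assms(1,3,5,6) \<open>0 < \<eta>\<close> \<open>\<eta> \<le> 1/2\<close> \<open>\<eta> \<le> a\<close> by blast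
qed

lemma interior_convex_meets_horizontal_line:
  fixes K :: "(real \<times> real) set"
  assumes "convex K" "interior K \<noteq> {}" "p \<in> closure K" "q \<in> closure K" "snd p < h" "h < snd q"
  shows "\<exists>w \<in> interior K. snd w = h"
proof -
  define I where "I = snd ` interior K"
  have "convex I"
    unfolding I_def using assms(1) by (simp add: convex_linear_image linear_snd)
  have "snd ` closure K \<subseteq> closure I"
  proof -
    have "snd ` closure (interior K) \<subseteq> closure I"
      unfolding I_def by (intro image_closure_subset continuous_intros closure_subset) auto
    then show ?thesis
      using convex_closure_interior[OF assms(1,2)] by simp
  qed
  then have "closed_segment (snd p) (snd q) \<subseteq> closure I"
    using assms(3,4) convex_closure[OF \<open>convex I\<close>] by (simp add: closed_segment_subset image_subset_iff)
  then have "{snd p<..<snd q} \<subseteq> closure I"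
    using assms(5,6) by (auto simp: closed_segment_eq_real_ivl)
  then have "h \<in> interior (closure I)"
    using assms(5,6) by (meson greaterThanLessThan_iff interior_maximal open_greaterThanLessThan subsetD)
  then have "h \<in> I"
    using convex_interior_closure[OF \<open>convex I\<close>] interior_subset by blast
  then show ?thesis
    unfolding I_def by auto
qed

lemma lattice_width_le_height:
  fixes K :: "(real \<times> real) set"
  assumes "compact K" "K \<noteq> {}" and height: "\<And>p q. p \<in> K \<Longrightarrow> q \<in> K \<Longrightarrow> \<bar>snd p - snd q\<bar> \<le> w"
  shows "lattice_width K \<le> w"
proof -
  define g where "g = (\<lambda>(u :: int \<times> int) (xy :: (real \<times> real) \<times> (real \<times> real)).
    \<bar>of_int (fst u) * (fst (fst xy) - fst (snd xy)) + of_int (snd u) * (snd (fst xy) - snd (snd xy))\<bar>)"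
  define f where "f = (\<lambda>u. SUP xy \<in> K \<times> K. g u xy)"
  have bdd: "bdd_above (g u ` (K \<times> K))" for u
  proof -
    have "compact (g u ` (K \<times> K))"
      unfolding g_def using assms(1)
      by (intro compact_continuous_image compact_Times continuous_intros) auto
    then show ?thesis
      by (intro bounded_imp_bdd_above compact_imp_bounded)
  qed
  obtain p where "p \<in> K"
    using assms(2) by blast
  have "0 \<le> f u" for u
  proof -
    have "g u (p, p) \<le> f u"
      unfolding f_def using bdd \<open>p \<in> K\<close> by (intro cSUP_upper) auto
    then show ?thesis
      by (simp add: g_def)
  qed
  then have "lattice_width K \<le> f (0, 1)"
    unfolding lattice_width_def f_def g_def by (intro cINF_lower bdd_belowI) auto
  also have "f (0, 1) \<le> w"
    unfolding f_def using assms(2) height by (intro cSUP_least) (auto simp: g_def)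
  finally show ?thesis .
qed

lemma convex_subset_horizontal_strip:
  fixes K :: "(real \<times> real) set"
  assumes "convex K" "interior K \<noteq> {}" "p\<^sub>0 \<in> K" "lo < snd p\<^sub>0" "snd p\<^sub>0 < hi"
    and avoids: "\<And>w. w \<in> interior K \<Longrightarrow> snd w \<noteq> lo \<and> snd w \<noteq> hi"
  shows "K \<subseteq> {p. lo \<le> snd p \<and> snd p \<le> hi}"
proof
  fix p assume "p \<in> K"
  have "p\<^sub>0 \<in> closure K" "p \<in> closure K"
    using \<open>p\<^sub>0 \<in> K\<close> \<open>p \<in> K\<close> closure_subset by auto
  then show "p \<in> {p. lo \<le> snd p \<and> snd p \<le> hi}"
    using interior_convex_meets_horizontal_line[OF assms(1,2)] assms(4,5) avoids
    by (metis (mono_tags, lifting) mem_Collect_eq not_le)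
qed

theorem lemma5p4:
  fixes P :: "(real \<times> real) set" and a :: real
  assumes "polygon P"
    and "R_Delta2_free P"
    and "a > 0"
    and "rational_diameter P = 1 + 2 * a"
    and "closed_segment (- a, 0) (1 + a, 0) \<subseteq> P"
  shows "(\<forall>b :: int.
            interior P \<inter> closed_segment (of_int b - a, 1) (of_int b + a, 1) = {} \<and>
            interior P \<inter> closed_segment (of_int b - a, - 1) (of_int b + a, - 1) = {}) \<and>
         (a \<ge> 1 / 2 \<longrightarrow> P \<subseteq> {p. - 1 \<le> snd p \<and> snd p \<le> 1} \<and> lattice_width P \<le> 2)"
proof -
  have "polytope P" and "aff_dim P = 2"
    using assms(1) by (auto simp: polygon_def)
  then have "convex P" and "rel_interior P = interior P"
    by (auto simp: polytope_imp_convex rel_interior_interior aff_dim_eq_full[symmetric])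
  then have avoids: "(c, of_int e) \<notin> interior P" if "\<bar>e\<bar> = 1" "\<bar>c - of_int b\<bar> \<le> a" for c b e
    using R_unimodular_triangle_in_interior[of P a c e b] assms(2,3,5) closure_subset that
    by (fastforce simp: R_Delta2_free_def)
  have segments: "interior P \<inter> closed_segment (of_int b - a, of_int e) (of_int b + a, of_int e) = {}"
    if "\<bar>e\<bar> = 1" for b e :: int
    using avoids[OF that, where b = b] \<open>a > 0\<close> by (auto simp: closed_segment_horizontal closed_segment_eq_real_ivl abs_le_iff)
  have "(0, 0) \<in> P"
    using assms(3,5) by (auto simp: closed_segment_horizontal closed_segment_eq_real_ivl)
  have strip: "P \<subseteq> {p. - 1 \<le> snd p \<and> snd p \<le> 1}" if "a \<ge> 1/2"
  proof (rule convex_subset_horizontal_strip)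
    show "interior P \<noteq> {}"
      using \<open>(0, 0) \<in> P\<close> \<open>convex P\<close> \<open>rel_interior P = interior P\<close> rel_interior_eq_empty by auto
    show "snd w \<noteq> -1 \<and> snd w \<noteq> 1" if "w \<in> interior P" for w
      using that avoids[of "-1" "fst w" "round (fst w)"] avoids[of 1 "fst w" "round (fst w)"]
        of_int_round_abs_le[of "fst w"] \<open>a \<ge> 1/2\<close>
      by (cases w) (auto simp: abs_minus_commute)
  qed (use \<open>convex P\<close> \<open>(0, 0) \<in> P\<close> in auto)
  show ?thesis
  proof (intro conjI allI impI)
    fix b :: int
    show "interior P \<inter> closed_segment (of_int b - a, 1) (of_int b + a, 1) = {}"
      using segments[of 1 b] by simp
    show "interior P \<inter> closed_segment (of_int b - a, - 1) (of_int b + a, - 1) = {}"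
      using segments[of "-1" b] by simp
  next
    assume "a \<ge> 1/2"
    then show in_strip: "P \<subseteq> {p. - 1 \<le> snd p \<and> snd p \<le> 1}"
      by (rule strip)
    have "\<bar>snd p - snd q\<bar> \<le> 2" if "p \<in> P" "q \<in> P" for p q
      using subsetD[OF in_strip that(1)] subsetD[OF in_strip that(2)] by (auto simp: abs_le_iff)
    then show "lattice_width P \<le> 2"
      using \<open>polytope P\<close> \<open>(0, 0) \<in> P\<close> by (intro lattice_width_le_height polytope_imp_compact) auto
  qed
qed

end
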